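(* For real parameters $p,r$, the Stolarsky mean $E_{p,r}$ is stable if and only if $(p-2r)(r-2p)(p+r)=0$; i.e. the only stable Stolarsky means are the power means $E_{2r,r}=B_r$, $E_{p,2p}=B_p$, $E_{p,-p}=B_0$.
   Context: For $s,t>0$, $s\neq t$: $E_{p,r}(s,t)=\big[\frac{r(t^p-s^p)}{p(t^r-s^r)}\big]^{1/(p-r)}$ for $p\ne r$, $p,r\ne0$; $E_{r,r}(s,t)=e^{-1/r}\big(t^{t^r}/s^{s^r}\big)^{1/(t^r-s^r)}$ for $r\ne0$; $E_{0,r}(s,t)=\big[\frac{t^r-s^r}{r(\log t-\log s)}\big]^{1/r}$ for $r\ne0$ (and symmetrically $E_{p,0}=E_{0,p}$); $E_{0,0}(s,t)=\sqrt{st}$; $E_{p,r}(s,s)=s$. Power mean: $B_r(s,t)=\big(\frac{s^r+t^r}2\big)^{1/r}$ for $r\ne0$, $B_0(s,t)=\sqrt{st}$. A mean $M$ is stable if $M(s,t)=M\big(M(s,M(s,t)),M(M(s,t),t)\big)$ for all $s,t>0$. *)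

theory Defs
  imports Complex_Main
begin

definition stolarsky :: "real \<Rightarrow> real \<Rightarrow> real \<Rightarrow> real \<Rightarrow> real" where
  "stolarsky p r s t =
     (if s = t then s
      else if p = 0 \<and> r = 0 then sqrt (s * t)
      else if p = r then
        exp (- 1 / r) * ((t powr (t powr r)) / (s powr (s powr r))) powr (1 / (t powr r - s powr r))
      else if p = 0 then ((t powr r - s powr r) / (r * (ln t - ln s))) powr (1 / r)
      else if r = 0 then ((t powr p - s powr p) / (p * (ln t - ln s))) powr (1 / p)
      else ((r * (t powr p - s powr p)) / (p * (t powr r - s powr r))) powr (1 / (p - r)))"

definition power_mean :: "real \<Rightarrow> real \<Rightarrow> real \<Rightarrow> real" where
  "power_mean r s t = (if r = 0 then sqrt (s * t) else ((s powr r + t powr r) / 2) powr (1 / r))"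

definition stable_mean :: "(real \<Rightarrow> real \<Rightarrow> real) \<Rightarrow> bool" where
  "stable_mean M \<longleftrightarrow>
     (\<forall>s t. s > 0 \<longrightarrow> t > 0 \<longrightarrow> M s t = M (M s (M s t)) (M (M s t) t))"

end

theory Submission
  imports Defs "HOL-Real_Asymp.Real_Asymp"
begin

text \<open>
  In logarithmic coordinates a Stolarsky mean is the arithmetic mean plus an even offset,
  ln E(exp (m - y), exp (m + y)) = m + g(y), and the Taylor series of ln (sinh z / z) and
  z coth z give g(y) = c y^2 + d y^4 + o(y^4) with c = (p + r)/6 and d = -(p + r)(p^2 + r^2)/180.
  Stability of such a mean is a functional equation for g, and comparing the y^4-terms in it
  forces 2 c^3 + 3 d = 0, which is (p - 2r)(r - 2p)(p + r) = 0 up to the factor 1/270.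
  Conversely, in these three cases E is a power mean, and B_r is stable because it is the
  arithmetic mean of r-th powers.
\<close>

section \<open>Stable means in logarithmic coordinates\<close>

lemma filterlim_mult_at_0:
  fixes f :: "real \<Rightarrow> real"
  assumes "(f \<longlongrightarrow> L) (at 0)" and "L \<noteq> 0"
  shows "filterlim (\<lambda>y. y * f y) (at 0) (at 0)"
proof (rule filterlim_atI)
  show "((\<lambda>y. y * f y) \<longlongrightarrow> 0) (at 0)"
    using tendsto_mult[OF tendsto_ident_at assms(1)] by simp
  have "\<forall>\<^sub>F y in at 0. f y \<noteq> 0"
    using tendsto_imp_eventually_ne[OF assms] .
  then show "\<forall>\<^sub>F y in at 0. y * f y \<noteq> 0"
    by (auto simp: eventually_at_filter elim: eventually_mono)
qed

definition offset_equation :: "(real \<Rightarrow> real) \<Rightarrow> bool" where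
  "offset_equation G \<longleftrightarrow> (\<forall>y. G ((y + G y) / 2) + G ((y - G y) / 2)
     + 2 * G ((y + G ((y - G y) / 2) - G ((y + G y) / 2)) / 2) = G y)"

lemma stable_mean_offset_equation:
  fixes M :: "real \<Rightarrow> real \<Rightarrow> real" and G :: "real \<Rightarrow> real"
  assumes offset: "\<And>a b. M (exp a) (exp b) = exp ((a + b) / 2 + G ((b - a) / 2))"
    and stable: "stable_mean M"
  shows "offset_equation G"
  unfolding offset_equation_def
proof
  fix y :: real
  define u where "u = (y + G y) / 2"
  define v where "v = (y - G y) / 2"
  define w where "w = (y + G v - G u) / 2"
  define A where "A = (G y - y) / 2 + G u"
  define B where "B = (G y + y) / 2 + G v"
  have "M (exp (- y)) (exp y) = exp (G y)"
    using offset[of "- y" y] by simp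
  moreover have "M (exp (- y)) (exp (G y)) = exp A"
    using offset[of "- y" "G y"] by (simp add: A_def u_def add.commute)
  moreover have "M (exp (G y)) (exp y) = exp B"
    using offset[of "G y" y] by (simp add: B_def v_def)
  moreover have "M (exp A) (exp B) = exp ((A + B) / 2 + G ((B - A) / 2))"
    by (rule offset)
  moreover have "M (exp (- y)) (exp y)
      = M (M (exp (- y)) (M (exp (- y)) (exp y))) (M (M (exp (- y)) (exp y)) (exp y))"
    using stable unfolding stable_mean_def by simp
  ultimately have "G y = (A + B) / 2 + G ((B - A) / 2)"
    by simp
  moreover have "(A + B) / 2 = G y / 2 + (G u + G v) / 2" and "(B - A) / 2 = (y + G v - G u) / 2"
    by (simp_all add: A_def B_def field_simps)
  ultimately have "G y = G y / 2 + (G u + G v) / 2 + G w"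
    by (simp add: w_def)
  then have "G u + G v + 2 * G w = G y"
    by (simp add: field_simps)
  then show "G ((y + G y) / 2) + G ((y - G y) / 2)
           + 2 * G ((y + G ((y - G y) / 2) - G ((y + G y) / 2)) / 2) = G y"
    unfolding w_def u_def v_def .
qed

lemma quartic_ansatz_argument:
  fixes y c ha hb \<kappa> \<alpha> \<beta> :: real
  assumes "\<alpha> = (1 + y * \<kappa>) / 2" and "\<beta> = (1 - y * \<kappa>) / 2"
  shows "(y + (c * (y * \<beta>)^2 + (y * \<beta>)^4 * hb) - (c * (y * \<alpha>)^2 + (y * \<alpha>)^4 * ha)) / 2
    = y * ((1 + y^2 * (- c * \<kappa> + y * (\<beta>^4 * hb - \<alpha>^4 * ha))) / 2)"
proof -
  have squares: "\<beta>^2 - \<alpha>^2 = - y * \<kappa>"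
    unfolding assms by (simp add: power2_eq_square field_simps)
  have "(y + (c * (y * \<beta>)^2 + (y * \<beta>)^4 * hb) - (c * (y * \<alpha>)^2 + (y * \<alpha>)^4 * ha)) / 2
      = (y + c * y^2 * (\<beta>^2 - \<alpha>^2) + y^4 * (\<beta>^4 * hb - \<alpha>^4 * ha)) / 2"
    by (simp add: power_mult_distrib algebra_simps)
  also have "\<dots> = y * ((1 + y^2 * (- c * \<kappa> + y * (\<beta>^4 * hb - \<alpha>^4 * ha))) / 2)"
    unfolding squares by (simp add: power2_eq_square power4_eq_xxxx algebra_simps)
  finally show ?thesis .
qed

lemma quartic_ansatz_sum:
  fixes y c hy ha hb hc \<kappa> \<delta> \<alpha> \<beta> \<gamma> :: real
  assumes "\<alpha> = (1 + y * \<kappa>) / 2" and "\<beta> = (1 - y * \<kappa>) / 2" and "\<gamma> = (1 + y^2 * \<delta>) / 2"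
  shows "(c * (y * \<alpha>)^2 + (y * \<alpha>)^4 * ha) + (c * (y * \<beta>)^2 + (y * \<beta>)^4 * hb)
      + 2 * (c * (y * \<gamma>)^2 + (y * \<gamma>)^4 * hc) - (c * y^2 + y^4 * hy)
    = y^4 * (c * (\<kappa>^2 + 2 * \<delta> + y^2 * \<delta>^2) / 2 - hy
      + \<alpha>^4 * ha + \<beta>^4 * hb + 2 * \<gamma>^4 * hc)"
proof -
  have squares: "\<alpha>^2 + \<beta>^2 + 2 * \<gamma>^2 - 1 = y^2 * (\<kappa>^2 + 2 * \<delta> + y^2 * \<delta>^2) / 2"
    unfolding assms by (simp add: power2_eq_square field_simps)
  have "(c * (y * \<alpha>)^2 + (y * \<alpha>)^4 * ha) + (c * (y * \<beta>)^2 + (y * \<beta>)^4 * hb)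
      + 2 * (c * (y * \<gamma>)^2 + (y * \<gamma>)^4 * hc) - (c * y^2 + y^4 * hy)
    = c * y^2 * (\<alpha>^2 + \<beta>^2 + 2 * \<gamma>^2 - 1) + y^4 * (\<alpha>^4 * ha + \<beta>^4 * hb + 2 * \<gamma>^4 * hc - hy)"
    by (simp add: power_mult_distrib algebra_simps)
  also have "\<dots> = y^4 * (c * (\<kappa>^2 + 2 * \<delta> + y^2 * \<delta>^2) / 2 - hy
      + \<alpha>^4 * ha + \<beta>^4 * hb + 2 * \<gamma>^4 * hc)"
    unfolding squares by (simp add: power2_eq_square power4_eq_xxxx algebra_simps)
  finally show ?thesis .
qed

text \<open>Write \<open>G y = c y\<^sup>2 + y\<^sup>4 h y\<close>. The arguments \<open>(y \<plusminus> G y) / 2\<close> of \<open>G\<close> in the offset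
  equation are then \<open>y \<alpha> y\<close> and \<open>y \<beta> y\<close>, the nested argument is \<open>y \<gamma> y\<close>, and the equation divided
  by \<open>y\<^sup>4\<close> says that \<open>remainder y = 0\<close>; all three scale factors tend to \<open>1/2\<close>.\<close>

locale quartic_ansatz =
  fixes c :: real and h :: "real \<Rightarrow> real"
begin

definition \<kappa> :: "real \<Rightarrow> real" where "\<kappa> y = c + y^2 * h y"
definition \<alpha> :: "real \<Rightarrow> real" where "\<alpha> y = (1 + y * \<kappa> y) / 2"
definition \<beta> :: "real \<Rightarrow> real" where "\<beta> y = (1 - y * \<kappa> y) / 2"
definition \<delta> :: "real \<Rightarrow> real" where
  "\<delta> y = - c * \<kappa> y + y * (\<beta> y^4 * h (y * \<beta> y) - \<alpha> y^4 * h (y * \<alpha> y))"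
definition \<gamma> :: "real \<Rightarrow> real" where "\<gamma> y = (1 + y^2 * \<delta> y) / 2"
definition remainder :: "real \<Rightarrow> real" where
  "remainder y = c * (\<kappa> y^2 + 2 * \<delta> y + y^2 * \<delta> y^2) / 2 - h y
     + \<alpha> y^4 * h (y * \<alpha> y) + \<beta> y^4 * h (y * \<beta> y) + 2 * \<gamma> y^4 * h (y * \<gamma> y)"

lemma remainder_eq_0:
  fixes G :: "real \<Rightarrow> real"
  assumes eq: "offset_equation G"
    and G_eq: "\<And>z. z \<noteq> 0 \<Longrightarrow> G z = c * z^2 + z^4 * h z"
    and y0: "y \<noteq> 0" and "\<alpha> y \<noteq> 0" "\<beta> y \<noteq> 0" "\<gamma> y \<noteq> 0"
  shows "remainder y = 0"
proof -
  have ya: "y * \<alpha> y \<noteq> 0" and yb: "y * \<beta> y \<noteq> 0" and yg: "y * \<gamma> y \<noteq> 0"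
    using assms by auto
  have u: "(y + G y) / 2 = y * \<alpha> y" and v: "(y - G y) / 2 = y * \<beta> y"
    using y0 by (simp_all add: G_eq \<alpha>_def \<beta>_def \<kappa>_def field_simps power2_eq_square power4_eq_xxxx)
  have w: "(y + G (y * \<beta> y) - G (y * \<alpha> y)) / 2 = y * \<gamma> y"
    unfolding G_eq[OF yb] G_eq[OF ya] \<gamma>_def \<delta>_def
    by (rule quartic_ansatz_argument[OF \<alpha>_def \<beta>_def])
  have "y^4 * remainder y = G (y * \<alpha> y) + G (y * \<beta> y) + 2 * G (y * \<gamma> y) - G y"
    unfolding G_eq[OF ya] G_eq[OF yb] G_eq[OF yg] G_eq[OF y0] remainder_def
    by (rule quartic_ansatz_sum[OF \<alpha>_def \<beta>_def \<gamma>_def, symmetric])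
  also have "\<dots> = 0"
    using spec[OF eq[unfolded offset_equation_def], of y] unfolding u v w by simp
  finally show ?thesis
    using y0 by simp
qed

context
  fixes d :: real
  assumes h: "(h \<longlongrightarrow> d) (at 0)"
begin

lemma tendsto_scale_factors:
  shows tendsto_\<kappa>: "(\<kappa> \<longlongrightarrow> c) (at 0)"
    and tendsto_\<alpha>: "(\<alpha> \<longlongrightarrow> 1/2) (at 0)"
    and tendsto_\<beta>: "(\<beta> \<longlongrightarrow> 1/2) (at 0)"
    and tendsto_\<delta>: "(\<delta> \<longlongrightarrow> - c * c) (at 0)"
    and tendsto_\<gamma>: "(\<gamma> \<longlongrightarrow> 1/2) (at 0)"
proof -
  show \<kappa>: "(\<kappa> \<longlongrightarrow> c) (at 0)"
    using tendsto_add[OF tendsto_const tendsto_mult[OF tendsto_power[OF tendsto_ident_at, of 2] h]]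
    unfolding \<kappa>_def by simp
  show \<alpha>: "(\<alpha> \<longlongrightarrow> 1/2) (at 0)" and \<beta>: "(\<beta> \<longlongrightarrow> 1/2) (at 0)"
    unfolding \<alpha>_def \<beta>_def by (auto intro!: tendsto_eq_intros \<kappa>)
  have "(\<delta> \<longlongrightarrow> - c * c + 0 * ((1/2)^4 * d - (1/2)^4 * d)) (at 0)"
    unfolding \<delta>_def
    by (intro tendsto_intros \<kappa> \<alpha> \<beta> filterlim_compose[OF h filterlim_mult_at_0[OF \<alpha>]]
        filterlim_compose[OF h filterlim_mult_at_0[OF \<beta>]]) simp_all
  then show \<delta>: "(\<delta> \<longlongrightarrow> - c * c) (at 0)"
    by simp
  show "(\<gamma> \<longlongrightarrow> 1/2) (at 0)"
    unfolding \<gamma>_def by (auto intro!: tendsto_eq_intros \<delta>)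
qed

lemma tendsto_remainder: "(remainder \<longlongrightarrow> - (2 * c^3 + 3 * d) / 4) (at 0)"
proof -
  have compose: "((\<lambda>y. h (y * f y)) \<longlongrightarrow> d) (at 0)" if "(f \<longlongrightarrow> 1/2) (at 0)" for f
    using filterlim_compose[OF h filterlim_mult_at_0[OF that]] by simp
  have "((\<lambda>y. c * (\<kappa> y^2 + 2 * \<delta> y + y^2 * \<delta> y^2) / 2 - h y + \<alpha> y^4 * h (y * \<alpha> y)
      + \<beta> y^4 * h (y * \<beta> y) + 2 * \<gamma> y^4 * h (y * \<gamma> y)) \<longlongrightarrow> c * (c^2 + 2 * (- c * c) + 0^2 * (- c * c)^2) / 2 - d
       + (1/2)^4 * d + (1/2)^4 * d + 2 * (1/2)^4 * d) (at 0)"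
    by (intro tendsto_add tendsto_diff tendsto_mult tendsto_divide tendsto_power tendsto_const
        tendsto_ident_at h tendsto_scale_factors compose[OF tendsto_\<alpha>] compose[OF tendsto_\<beta>]
        compose[OF tendsto_\<gamma>]) simp_all
  moreover have "c * (c^2 + 2 * (- c * c) + 0^2 * (- c * c)^2) / 2 - d
       + (1/2)^4 * d + (1/2)^4 * d + 2 * (1/2)^4 * d = - (2 * c^3 + 3 * d) / (4::real)"
    by (simp add: power2_eq_square power3_eq_cube field_simps)
  ultimately show ?thesis
    unfolding remainder_def[abs_def] by (rule back_subst)
qed

lemma quartic_constraint:
  fixes G :: "real \<Rightarrow> real"
  assumes eq: "offset_equation G"
    and G_eq: "\<And>z. z \<noteq> 0 \<Longrightarrow> G z = c * z^2 + z^4 * h z"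
  shows "2 * c^3 + 3 * d = 0"
proof -
  have "\<forall>\<^sub>F y in at 0. \<alpha> y \<noteq> 0 \<and> \<beta> y \<noteq> 0 \<and> \<gamma> y \<noteq> 0"
    using tendsto_\<alpha> tendsto_\<beta> tendsto_\<gamma> by (auto intro!: eventually_conj tendsto_imp_eventually_ne)
  then have "\<forall>\<^sub>F y in at 0. remainder y = 0"
    by (auto simp: eventually_at_filter elim!: eventually_mono intro: remainder_eq_0[OF eq G_eq])
  then have "(remainder \<longlongrightarrow> 0) (at 0)"
    by (simp add: tendsto_eventually)
  with tendsto_remainder have "- (2 * c^3 + 3 * d) / 4 = 0"
    by (rule tendsto_unique[OF at_neq_bot])
  then show ?thesis
    by simp
qed

end

end

lemma offset_equation_quartic_constraint:
  fixes G :: "real \<Rightarrow> real"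
  assumes eq: "offset_equation G"
    and expansion: "((\<lambda>y. (G y - c * y^2) / y^4) \<longlongrightarrow> d) (at 0)"
  shows "2 * c^3 + 3 * d = 0"
  by (rule quartic_ansatz.quartic_constraint[OF expansion eq]) (simp add: field_simps)

section \<open>The logarithmic offset of a Stolarsky mean\<close>

definition sinhc :: "real \<Rightarrow> real" where
  "sinhc z = (if z = 0 then 1 else sinh z / z)"

text \<open>\<open>stolarsky_offset p r y = ln E(exp (m - y), exp (m + y)) - m\<close>, which by homogeneity
  of E does not depend on m.\<close>

definition stolarsky_offset :: "real \<Rightarrow> real \<Rightarrow> real \<Rightarrow> real" where
  "stolarsky_offset p r y =
     (if p \<noteq> r then (ln (sinhc (p * y)) - ln (sinhc (r * y))) / (p - r)
      else if r = 0 \<or> y = 0 then 0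
      else y * cosh (r * y) / sinh (r * y) - 1 / r)"

lemma sinhc_pos: "sinhc z > 0"
proof (cases z "0::real" rule: linorder_cases)
  case less
  then show ?thesis by (simp add: sinhc_def divide_neg_neg)
qed (simp_all add: sinhc_def)

lemma exp_diff_eq_sinhc:
  fixes k a b :: real
  shows "exp (k * b) - exp (k * a) = k * (b - a) * exp (k * ((a + b) / 2) + ln (sinhc (k * ((b - a) / 2))))"
proof (cases "k * (b - a) = 0")
  case False
  define m where "m = (a + b) / 2"
  define y where "y = (b - a) / 2"
  have ky: "k * y \<noteq> 0"
    using False by (simp add: y_def)
  have "k * b = k * m + k * y" and "k * a = k * m + - (k * y)"
    by (simp_all add: m_def y_def field_simps)
  then have "exp (k * b) - exp (k * a) = exp (k * m) * (exp (k * y) - exp (- (k * y)))"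
    by (simp only: exp_add right_diff_distrib)
  also have "\<dots> = k * (b - a) * (exp (k * m) * sinhc (k * y))"
    using ky by (simp add: sinhc_def sinh_field_def y_def field_simps)
  finally show ?thesis
    using sinhc_pos by (simp add: exp_add m_def y_def)
qed auto

lemma stolarsky_exp_exp_diagonal:
  fixes r a b :: real
  assumes "r \<noteq> 0" and "a \<noteq> b"
  shows "stolarsky r r (exp a) (exp b)
    = exp ((a + b) / 2 + ((b - a) / 2 * cosh (r * ((b - a) / 2)) / sinh (r * ((b - a) / 2)) - 1 / r))"
proof -
  define m where "m = (a + b) / 2"
  define y where "y = (b - a) / 2"
  have dne: "exp (r * y) - exp (- (r * y)) \<noteq> 0"
    using assms by (simp add: y_def)
  have "r * b = r * m + r * y" and "r * a = r * m + - (r * y)"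
    by (simp_all add: m_def y_def field_simps)
  then have eb: "exp (r * b) = exp (r * m) * exp (r * y)"
    and ea: "exp (r * a) = exp (r * m) * exp (- (r * y))"
    by (simp_all only: exp_add)
  have denom: "exp (r * b) - exp (r * a) = 2 * exp (r * m) * sinh (r * y)"
    unfolding eb ea by (simp add: sinh_field_def algebra_simps)
  have ab_my: "b = m + y" "a = m - y"
    by (simp_all add: m_def y_def field_simps)
  have "(exp (r * b) * b - exp (r * a) * a) / (exp (r * b) - exp (r * a))
      = (exp (r * m) * (exp (r * y) * (m + y) - exp (- (r * y)) * (m - y))) / (exp (r * m) * (2 * sinh (r * y)))"
    unfolding denom unfolding eb ea by (simp add: ab_my algebra_simps)
  also have "\<dots> = m + y * cosh (r * y) / sinh (r * y)"
    using dne by (simp add: sinh_field_def cosh_field_def field_simps)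
  finally have quotient: "(exp (r * b) * b - exp (r * a) * a) / (exp (r * b) - exp (r * a))
      = m + y * cosh (r * y) / sinh (r * y)" .
  have "stolarsky r r (exp a) (exp b)
      = exp (- 1 / r) * exp ((exp (r * b) * b - exp (r * a) * a) / (exp (r * b) - exp (r * a)))"
    using assms by (simp add: stolarsky_def exp_powr_real mult.commute flip: exp_diff)
  also have "\<dots> = exp (m + (y * cosh (r * y) / sinh (r * y) - 1 / r))"
    unfolding quotient by (simp add: algebra_simps flip: exp_add)
  finally show ?thesis
    by (simp add: m_def y_def)
qed

lemma stolarsky_zero_right: "stolarsky p 0 s t = stolarsky 0 p s t"
  by (simp add: stolarsky_def)

lemma stolarsky_exp_exp_zero:
  fixes r a b :: real
  assumes "r \<noteq> 0" and "a \<noteq> b"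
  shows "stolarsky 0 r (exp a) (exp b) = exp ((a + b) / 2 + ln (sinhc (r * ((b - a) / 2))) / r)"
proof -
  have "stolarsky 0 r (exp a) (exp b) = ((exp (r * b) - exp (r * a)) / (r * (b - a))) powr (1 / r)"
    using assms by (simp add: stolarsky_def exp_powr_real mult.commute)
  also have "\<dots> = exp (r * ((a + b) / 2) + ln (sinhc (r * ((b - a) / 2)))) powr (1 / r)"
    using assms by (simp add: exp_diff_eq_sinhc)
  also have "\<dots> = exp ((a + b) / 2 + ln (sinhc (r * ((b - a) / 2))) / r)"
    using assms by (simp add: exp_powr_real field_simps)
  finally show ?thesis .
qed

lemma stolarsky_exp_exp_generic:
  fixes p r a b :: real
  assumes "p \<noteq> r" and "p \<noteq> 0" and "r \<noteq> 0" and "a \<noteq> b"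
  shows "stolarsky p r (exp a) (exp b)
    = exp ((a + b) / 2 + (ln (sinhc (p * ((b - a) / 2))) - ln (sinhc (r * ((b - a) / 2)))) / (p - r))"
proof -
  define E where "E k = exp (k * ((a + b) / 2) + ln (sinhc (k * ((b - a) / 2))))" for k
  have "r * (exp (p * b) - exp (p * a)) / (p * (exp (r * b) - exp (r * a))) = E p / E r"
    unfolding exp_diff_eq_sinhc E_def[symmetric] using assms by (simp add: E_def field_simps)
  also have "\<dots> = exp ((p * ((a + b) / 2) + ln (sinhc (p * ((b - a) / 2))))
      - (r * ((a + b) / 2) + ln (sinhc (r * ((b - a) / 2)))))"
    by (simp add: E_def exp_diff)
  finally have "stolarsky p r (exp a) (exp b) = exp ((p * ((a + b) / 2) + ln (sinhc (p * ((b - a) / 2))))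
      - (r * ((a + b) / 2) + ln (sinhc (r * ((b - a) / 2))))) powr (1 / (p - r))"
    using assms by (simp add: stolarsky_def exp_powr_real mult.commute)
  also have "\<dots> = exp ((a + b) / 2 + (ln (sinhc (p * ((b - a) / 2))) - ln (sinhc (r * ((b - a) / 2)))) / (p - r))"
    using assms by (simp add: exp_powr_real field_simps)
  finally show ?thesis .
qed

lemma stolarsky_exp_exp:
  "stolarsky p r (exp a) (exp b) = exp ((a + b) / 2 + stolarsky_offset p r ((b - a) / 2))"
proof (cases "a = b")
  case True
  then show ?thesis
    by (simp add: stolarsky_def stolarsky_offset_def sinhc_def)
next
  case False
  consider "p = r" "r = 0" | "p = r" "r \<noteq> 0" | "p \<noteq> r" "p = 0" | "p \<noteq> r" "r = 0"
    | "p \<noteq> r" "p \<noteq> 0" "r \<noteq> 0"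
    by blast
  then show ?thesis
  proof cases
    case 1
    have "exp a * exp b = (exp ((a + b) / 2))^2"
      by (simp add: power2_eq_square flip: exp_add)
    then show ?thesis
      using 1 False by (simp add: stolarsky_def stolarsky_offset_def)
  next
    case 2
    then show ?thesis
      using stolarsky_exp_exp_diagonal[OF _ False] False by (simp add: stolarsky_offset_def)
  next
    case 3
    then show ?thesis
      using stolarsky_exp_exp_zero[of r a b] False by (simp add: stolarsky_offset_def sinhc_def)
  next
    case 4
    then show ?thesis
      using stolarsky_exp_exp_zero[of p a b] False
      by (simp add: stolarsky_zero_right stolarsky_offset_def sinhc_def)
  next
    case 5
    then show ?thesis
      using stolarsky_exp_exp_generic[OF 5 False] by (simp add: stolarsky_offset_def)
  qed
qed

lemma ln_sinhc_expansion: "((\<lambda>z. (ln (sinhc z) - 1 / 6 * z^2) / z^4) \<longlongrightarrow> - 1 / 180) (at 0)"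
proof -
  have "((\<lambda>z::real. (ln (sinh z / z) - 1 / 6 * z^2) / z^4) \<longlongrightarrow> - 1 / 180) (at 0)"
    by real_asymp
  moreover have "\<forall>\<^sub>F z in at 0. (ln (sinh z / z) - 1 / 6 * z^2) / z^4 = (ln (sinhc z) - 1 / 6 * z^2) / z^4"
    by (simp add: eventually_at_filter sinhc_def)
  ultimately show ?thesis
    by (rule Lim_transform_eventually)
qed

lemma coth_expansion: "((\<lambda>z::real. (z * cosh z / sinh z - 1 - 1 / 3 * z^2) / z^4) \<longlongrightarrow> - 1 / 45) (at 0)"
  by real_asymp

lemma quartic_expansion_rescale:
  fixes f :: "real \<Rightarrow> real"
  assumes expansion: "((\<lambda>z. (f z - c * z^2) / z^4) \<longlongrightarrow> d) (at 0)" and "k \<noteq> 0"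
  shows "((\<lambda>y. (f (k * y) - c * k^2 * y^2) / y^4) \<longlongrightarrow> d * k^4) (at 0)"
proof -
  have "((\<lambda>y. (f (y * k) - c * (y * k)^2) / (y * k)^4) \<longlongrightarrow> d) (at 0)"
    using filterlim_compose[OF expansion filterlim_mult_at_0[OF tendsto_const \<open>k \<noteq> 0\<close>]] .
  then have "((\<lambda>y. (f (y * k) - c * (y * k)^2) / (y * k)^4 * k^4) \<longlongrightarrow> d * k^4) (at 0)"
    by (rule tendsto_mult_right)
  moreover have "\<forall>\<^sub>F y in at 0. (f (y * k) - c * (y * k)^2) / (y * k)^4 * k^4 = (f (k * y) - c * k^2 * y^2) / y^4"
    using \<open>k \<noteq> 0\<close> by (simp add: eventually_at_filter power_mult_distrib field_simps)
  ultimately show ?thesis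
    by (rule Lim_transform_eventually)
qed

lemma ln_sinhc_rescaled_expansion:
  "((\<lambda>y. (ln (sinhc (k * y)) - 1 / 6 * k^2 * y^2) / y^4) \<longlongrightarrow> - 1 / 180 * k^4) (at 0)"
proof (cases "k = 0")
  case False
  show ?thesis
    by (rule quartic_expansion_rescale[OF ln_sinhc_expansion False])
qed (simp add: sinhc_def)

lemma stolarsky_offset_expansion:
  "((\<lambda>y. (stolarsky_offset p r y - (p + r) / 6 * y^2) / y^4) \<longlongrightarrow> - (p + r) * (p^2 + r^2) / 180) (at 0)"
proof (cases "p = r")
  case True
  show ?thesis
  proof (cases "r = 0")
    case False
    have lim: "((\<lambda>y. (r * y * cosh (r * y) / sinh (r * y) - 1 - 1 / 3 * r^2 * y^2) / y^4 / r)
        \<longlongrightarrow> - 1 / 45 * r^4 / r) (at 0)"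
      by (rule tendsto_divide[OF quartic_expansion_rescale[OF coth_expansion False] tendsto_const False])
    have ev: "\<forall>\<^sub>F y in at 0. (r * y * cosh (r * y) / sinh (r * y) - 1 - 1 / 3 * r^2 * y^2) / y^4 / r
        = (stolarsky_offset p r y - (p + r) / 6 * y^2) / y^4"
      using True False by (simp add: eventually_at_filter stolarsky_offset_def field_simps power2_eq_square)
    have val: "- 1 / 45 * r^4 / r = - (p + r) * (p^2 + r^2) / 180"
      using True False by (simp add: field_simps power2_eq_square power4_eq_xxxx)
    show ?thesis
      using Lim_transform_eventually[OF lim ev] unfolding val .
  qed (simp add: True stolarsky_offset_def)
next
  case False
  have lim: "((\<lambda>y. ((ln (sinhc (p * y)) - 1 / 6 * p^2 * y^2) / y^4
      - (ln (sinhc (r * y)) - 1 / 6 * r^2 * y^2) / y^4) / (p - r))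
      \<longlongrightarrow> (- 1 / 180 * p^4 - - 1 / 180 * r^4) / (p - r)) (at 0)"
    using False by (intro tendsto_divide tendsto_diff tendsto_const ln_sinhc_rescaled_expansion) simp
  have ev: "\<forall>\<^sub>F y in at 0. ((ln (sinhc (p * y)) - 1 / 6 * p^2 * y^2) / y^4
      - (ln (sinhc (r * y)) - 1 / 6 * r^2 * y^2) / y^4) / (p - r)
      = (stolarsky_offset p r y - (p + r) / 6 * y^2) / y^4"
    using False by (simp add: eventually_at_filter stolarsky_offset_def field_simps power2_eq_square)
  have "r^4 - p^4 = (p - r) * (- (p + r) * (p^2 + r^2))"
    by algebra
  then have val: "(- 1 / 180 * p^4 - - 1 / 180 * r^4) / (p - r) = - (p + r) * (p^2 + r^2) / 180"
    using False by (simp add: field_simps)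
  show ?thesis
    using Lim_transform_eventually[OF lim ev] unfolding val .
qed

section \<open>The stable cases are power means\<close>

lemma stable_mean_cong:
  assumes "\<And>s t. s > 0 \<Longrightarrow> t > 0 \<Longrightarrow> M s t = N s t"
    and "\<And>s t. s > 0 \<Longrightarrow> t > 0 \<Longrightarrow> N s t > 0"
  shows "stable_mean M \<longleftrightarrow> stable_mean N"
  using assms unfolding stable_mean_def by auto

lemma power_mean_pos: "s > 0 \<Longrightarrow> t > 0 \<Longrightarrow> power_mean r s t > 0"
  using add_pos_pos[of "s powr r" "t powr r"] by (simp add: power_mean_def)

lemma power_mean_nonzero: "r \<noteq> 0 \<Longrightarrow> power_mean r s t = ((s powr r + t powr r) / 2) powr (1 / r)"
  by (simp add: power_mean_def)

lemma power_mean_powr: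
  assumes "s > 0" and "t > 0" and "r \<noteq> 0"
  shows "power_mean r s t powr r = (s powr r + t powr r) / 2"
  using assms by (simp add: power_mean_def powr_powr add_pos_pos)

lemma stable_power_mean: "stable_mean (power_mean r)"
  unfolding stable_mean_def
proof (intro allI impI)
  fix s t :: real
  assume s: "s > 0" and t: "t > 0"
  define m where "m = power_mean r s t"
  have m: "m > 0"
    using s t by (simp add: m_def power_mean_pos)
  show "m = power_mean r (power_mean r s m) (power_mean r m t)"
  proof (cases "r = 0")
    case True
    have "sqrt (s * m) * sqrt (m * t) = sqrt (s * t * (m * m))"
      by (simp add: real_sqrt_mult[symmetric] mult_ac)
    also have "\<dots> = m * m"
      using s t True by (simp add: m_def power_mean_def)
    finally show ?thesis
      using True m by (simp add: power_mean_def)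
  next
    case False
    have "m powr r = (s powr r + t powr r) / 2"
      using power_mean_powr[OF s t False] by (simp add: m_def)
    then have key: "(power_mean r s m powr r + power_mean r m t powr r) / 2 = (s powr r + t powr r) / 2"
      by (simp add: power_mean_powr[OF s m False] power_mean_powr[OF m t False] field_simps)
    have "power_mean r (power_mean r s m) (power_mean r m t)
        = ((power_mean r s m powr r + power_mean r m t powr r) / 2) powr (1 / r)"
      by (rule power_mean_nonzero[OF False])
    also have "\<dots> = m"
      unfolding key by (simp add: m_def power_mean_nonzero[OF False])
    finally show ?thesis
      by (rule sym)
  qed
qed

lemma powr_base_inj:
  fixes s t r :: real
  assumes "s > 0" and "t > 0" and "r \<noteq> 0" and "s powr r = t powr r"
  shows "s = t"
proof -
  have "s = (s powr r) powr (1 / r)"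
    using assms(1,3) by (simp add: powr_powr)
  also have "\<dots> = t"
    using assms(2-4) by (simp add: powr_powr)
  finally show ?thesis .
qed

lemma stolarsky_double_first_eq_power_mean:
  assumes s: "s > 0" and t: "t > 0"
  shows "stolarsky (2 * r) r s t = power_mean r s t"
proof (cases "s = t \<or> r = 0")
  case True
  then show ?thesis
    using s by (auto simp: stolarsky_def power_mean_def powr_powr)
next
  case False
  define x where "x = t powr r"
  define y where "y = s powr r"
  have "x - y \<noteq> 0"
    using powr_base_inj[OF t s] False by (auto simp: x_def y_def)
  have squares: "t powr (2 * r) = x * x" "s powr (2 * r) = y * y"
    by (simp_all add: x_def y_def flip: powr_add)
  have "stolarsky (2 * r) r s t = ((r * (x * x - y * y)) / (2 * r * (x - y))) powr (1 / (2 * r - r))"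
    using False by (simp add: stolarsky_def squares x_def [symmetric] y_def [symmetric])
  also have "(r * (x * x - y * y)) / (2 * r * (x - y)) = (y + x) / 2"
    using \<open>x - y \<noteq> 0\<close> False by (simp add: field_simps)
  finally show ?thesis
    using False by (simp add: power_mean_def x_def y_def)
qed

lemma stolarsky_double_second_eq_power_mean:
  assumes s: "s > 0" and t: "t > 0"
  shows "stolarsky p (2 * p) s t = power_mean p s t"
proof (cases "s = t \<or> p = 0")
  case True
  then show ?thesis
    using s by (auto simp: stolarsky_def power_mean_def powr_powr)
next
  case False
  define x where "x = t powr p"
  define y where "y = s powr p"
  have pos: "x > 0" "y > 0"
    using s t by (simp_all add: x_def y_def)
  have "x - y \<noteq> 0"
    using powr_base_inj[OF t s] False by (auto simp: x_def y_def)
  have squares: "t powr (2 * p) = x * x" "s powr (2 * p) = y * y"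
    by (simp_all add: x_def y_def flip: powr_add)
  have "stolarsky p (2 * p) s t = ((2 * p * (x - y)) / (p * (x * x - y * y))) powr (1 / (p - 2 * p))"
    using False by (simp add: stolarsky_def squares x_def [symmetric] y_def [symmetric])
  also have "(2 * p * (x - y)) / (p * (x * x - y * y)) = 2 / (x + y)"
  proof -
    have "x * x - y * y = (x - y) * (x + y)"
      by (simp add: algebra_simps)
    then show ?thesis
      using \<open>x - y \<noteq> 0\<close> False pos by (simp add: divide_simps mult_ac)
  qed
  also have "(2 / (x + y)) powr (1 / (p - 2 * p)) = ((y + x) / 2) powr (1 / p)"
  proof -
    have "1 / (p - 2 * p) = - (1 / p)"
      using False by (simp add: field_simps)
    moreover have "ln (2 / (x + y)) = - ln ((y + x) / 2)"
      using pos by (simp add: ln_div add.commute)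
    ultimately show ?thesis
      using pos by (simp add: powr_def)
  qed
  finally show ?thesis
    using False by (simp add: power_mean_def x_def y_def)
qed

lemma stolarsky_opposite_eq_geometric_mean:
  assumes s: "s > 0" and t: "t > 0"
  shows "stolarsky p (- p) s t = power_mean 0 s t"
proof (cases "s = t \<or> p = 0")
  case True
  then show ?thesis
    using s by (auto simp: stolarsky_def power_mean_def)
next
  case False
  define x where "x = t powr p"
  define y where "y = s powr p"
  have pos: "x > 0" "y > 0"
    using s t by (simp_all add: x_def y_def)
  have "x - y \<noteq> 0"
    using powr_base_inj[OF t s] False by (auto simp: x_def y_def)
  have inverses: "t powr (- p) = inverse x" "s powr (- p) = inverse y"
    by (simp_all add: x_def y_def powr_minus)
  have "stolarsky p (- p) s t = ((- p * (x - y)) / (p * (inverse x - inverse y))) powr (1 / (p - - p))"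
    using False by (simp add: stolarsky_def inverses x_def [symmetric] y_def [symmetric])
  also have "(- p * (x - y)) / (p * (inverse x - inverse y)) = x * y"
    using \<open>x - y \<noteq> 0\<close> False pos by (simp add: field_simps)
  also have "\<dots> = (s * t) powr p"
    using s t by (simp add: x_def y_def powr_mult)
  also have "((s * t) powr p) powr (1 / (p - - p)) = sqrt (s * t)"
    using False s t by (simp add: powr_powr powr_half_sqrt)
  finally show ?thesis
    by (simp add: power_mean_def)
qed

lemma stable_stolarsky_imp:
  assumes "stable_mean (stolarsky p r)"
  shows "(p - 2 * r) * (r - 2 * p) * (p + r) = 0"
proof -
  have "2 * ((p + r) / 6)^3 + 3 * (- (p + r) * (p^2 + r^2) / 180) = 0"
    by (rule offset_equation_quartic_constraint[OF
          stable_mean_offset_equation[OF stolarsky_exp_exp assms] stolarsky_offset_expansion])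
  moreover have "(p - 2 * r) * (r - 2 * p) * (p + r)
      = 270 * (2 * ((p + r) / 6)^3 + 3 * (- (p + r) * (p^2 + r^2) / 180))"
    by (simp add: field_simps power2_eq_square power3_eq_cube)
  ultimately show ?thesis
    by simp
qed

lemma stable_stolarsky_if:
  assumes "(p - 2 * r) * (r - 2 * p) * (p + r) = 0"
  shows "stable_mean (stolarsky p r)"
proof -
  from assms consider "p = 2 * r" | "r = 2 * p" | "r = - p"
    by fastforce
  then show ?thesis
  proof cases
    case 1
    then show ?thesis
      using stable_mean_cong[of "stolarsky p r" "power_mean r"] stable_power_mean
      by (simp add: stolarsky_double_first_eq_power_mean power_mean_pos)
  next
    case 2
    then show ?thesis
      using stable_mean_cong[of "stolarsky p r" "power_mean p"] stable_power_mean
      by (simp add: stolarsky_double_second_eq_power_mean power_mean_pos)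
  next
    case 3
    then show ?thesis
      using stable_mean_cong[of "stolarsky p r" "power_mean 0"] stable_power_mean
      by (simp add: stolarsky_opposite_eq_geometric_mean power_mean_pos)
  qed
qed

theorem mainTheorem14:
  shows "(\<forall>p r :: real. stable_mean (stolarsky p r) \<longleftrightarrow> (p - 2 * r) * (r - 2 * p) * (p + r) = 0)
    \<and> (\<forall>r s t :: real. s > 0 \<longrightarrow> t > 0 \<longrightarrow> stolarsky (2 * r) r s t = power_mean r s t)
    \<and> (\<forall>p s t :: real. s > 0 \<longrightarrow> t > 0 \<longrightarrow> stolarsky p (2 * p) s t = power_mean p s t)
    \<and> (\<forall>p s t :: real. s > 0 \<longrightarrow> t > 0 \<longrightarrow> stolarsky p (- p) s t = power_mean 0 s t)"
proof (intro conjI allI impI)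
  show "stable_mean (stolarsky p r) \<longleftrightarrow> (p - 2 * r) * (r - 2 * p) * (p + r) = 0" for p r :: real
    using stable_stolarsky_imp stable_stolarsky_if by blast
qed (simp_all add: stolarsky_double_first_eq_power_mean stolarsky_double_second_eq_power_mean
    stolarsky_opposite_eq_geometric_mean)

end
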